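(* Let $(\boldsymbol\Sigma,\sigma)$ be a primitive Markov subshift on a countable alphabet. Suppose $u\in C^0(\boldsymbol\Sigma)$ is a bounded sub-action for a bounded above and coercive potential $A\in C^0(\boldsymbol\Sigma)$. If $\mu\in\mathcal M_\sigma$ is an $A$-maximizing probability, then $\mu$ is supported in a Markov subshift on a finite alphabet, i.e. there exists an integer $I\ge0$ with $\operatorname{supp}\mu\subseteq\Sigma_I$.
   Context: Let $\mathbf M:\mathbb Z_+\times\mathbb Z_+\to\{0,1\}$ be a transition matrix. Put $\mathcal B_0=\{i:\mathbf M(i,j)=1\text{ for some }j\}$, $\mathcal B_n=\{i:\mathbf M(i,j)=1\text{ for some }j\in\mathcal B_{n-1}\}$. $\mathbf M$ is primitive if there exist $\mathbb F\subseteq\mathbb Z_+$ and an integer $K_0\ge0$ such that for all $i,j\in\bigcap_{n\ge0}\mathcal B_n$ there are $\ell_1,\dots,\ell_{K_0}\in\mathbb F$ with $\mathbf M(i,\ell_1)\mathbf M(\ell_1,\ell_2)\cdots\mathbf M(\ell_{K_0},j)=1$. $\boldsymbol\Sigma=\{\mathbf x\in\mathbb Z_+^{\mathbb Z_+}:\mathbf M(x_j,x_{j+1})=1\ \forall j\}$ with metric $d(\mathbf x,\mathbf y)=\lambda^{\min\{j:x_j\neq y_j\}}$, $\lambda\in(0,1)$ fixed; $\sigma$ the left shift; $[i]=\{\mathbf x:x_0=i\}$. $\mathcal M_\sigma$ = $\sigma$-invariant Borel probabilities; $\beta_A=\sup_{\mu\in\mathcal M_\sigma}\int A\,d\mu$;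 $\mu$ is $A$-maximizing if $\int A\,d\mu=\beta_A$. A sub-action for $A$ is a continuous $u$ with $A+u-u\circ\sigma\le\beta_A$ everywhere. $A$ is coercive if $\lim_{i\to+\infty}\sup A|_{[i]}=-\infty$. For an integer $I\ge0$, $\Sigma_I=\{\mathbf x\in\{0,\dots,I\}^{\mathbb Z_+}:\mathbf M(x_j,x_{j+1})=1\ \forall j\}$. *)

theory Defs
  imports "HOL-Probability.Probability"
begin

(* Transition matrices M : Z_+ x Z_+ -> {0,1}, encoded as boolean relations
   (M i j = True  iff  M(i,j) = 1).  Z_+ = {0,1,2,...} = nat. *)

fun Bset :: "(nat \<Rightarrow> nat \<Rightarrow> bool) \<Rightarrow> nat \<Rightarrow> nat set" where
  "Bset M 0 = {i. \<exists>j. M i j}"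
| "Bset M (Suc n) = {i. \<exists>j\<in>Bset M n. M i j}"

definition primitive :: "(nat \<Rightarrow> nat \<Rightarrow> bool) \<Rightarrow> bool" where
  "primitive M \<longleftrightarrow> (\<exists>(F::nat set) (K0::nat).
     \<forall>i\<in>(\<Inter>n. Bset M n). \<forall>j\<in>(\<Inter>n. Bset M n).
       \<exists>l::nat \<Rightarrow> nat. l 0 = i \<and> l (Suc K0) = j \<and>
          (\<forall>k\<in>{1..K0}. l k \<in> F) \<and> (\<forall>k\<le>K0. M (l k) (l (Suc k))))"

definition Sigma_M :: "(nat \<Rightarrow> nat \<Rightarrow> bool) \<Rightarrow> (nat \<Rightarrow> nat) set" where
  "Sigma_M M = {x. \<forall>j. M (x j) (x (Suc j))}"

definition Sigma_I :: "(nat \<Rightarrow> nat \<Rightarrow> bool) \<Rightarrow> nat \<Rightarrow> (nat \<Rightarrow> nat) set" where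
  "Sigma_I M I = {x. (\<forall>j. x j \<le> I) \<and> (\<forall>j. M (x j) (x (Suc j)))}"

definition shift :: "(nat \<Rightarrow> nat) \<Rightarrow> (nat \<Rightarrow> nat)" where
  "shift x = (\<lambda>j. x (Suc j))"

definition dist_sh :: "real \<Rightarrow> (nat \<Rightarrow> nat) \<Rightarrow> (nat \<Rightarrow> nat) \<Rightarrow> real" where
  "dist_sh lam x y = (if x = y then 0 else lam ^ (LEAST j. x j \<noteq> y j))"

definition cont_on_sh :: "real \<Rightarrow> (nat \<Rightarrow> nat) set \<Rightarrow> ((nat \<Rightarrow> nat) \<Rightarrow> real) \<Rightarrow> bool" where
  "cont_on_sh lam S f \<longleftrightarrow> (\<forall>x\<in>S. \<forall>e>0. \<exists>r>0. \<forall>y\<in>S. dist_sh lam x y < r \<longrightarrow> \<bar>f y - f x\<bar> < e)"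

definition open_sh :: "real \<Rightarrow> (nat \<Rightarrow> nat) set \<Rightarrow> (nat \<Rightarrow> nat) set set" where
  "open_sh lam S = {U. U \<subseteq> S \<and> (\<forall>x\<in>U. \<exists>r>0. \<forall>y\<in>S. dist_sh lam x y < r \<longrightarrow> y \<in> U)}"

definition borel_sh :: "real \<Rightarrow> (nat \<Rightarrow> nat) set \<Rightarrow> (nat \<Rightarrow> nat) set set" where
  "borel_sh lam S = sigma_sets S (open_sh lam S)"

definition invariant_probs :: "real \<Rightarrow> (nat \<Rightarrow> nat \<Rightarrow> bool) \<Rightarrow> (nat \<Rightarrow> nat) measure set" where
  "invariant_probs lam M = {mu. prob_space mu \<and> space mu = Sigma_M M \<and>
      sets mu = borel_sh lam (Sigma_M M) \<and> shift \<in> measurable mu mu \<and>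
      (\<forall>B\<in>sets mu. emeasure mu (shift -` B \<inter> space mu) = emeasure mu B)}"

(* integral of a function that is bounded above, valued in [-\<infinity>, \<infinity>) *)
definition int_ext :: "(nat \<Rightarrow> nat) measure \<Rightarrow> ((nat \<Rightarrow> nat) \<Rightarrow> real) \<Rightarrow> ereal" where
  "int_ext mu A = enn2ereal (\<integral>\<^sup>+ x. ennreal (A x) \<partial>mu) - enn2ereal (\<integral>\<^sup>+ x. ennreal (- A x) \<partial>mu)"

definition beta :: "real \<Rightarrow> (nat \<Rightarrow> nat \<Rightarrow> bool) \<Rightarrow> ((nat \<Rightarrow> nat) \<Rightarrow> real) \<Rightarrow> ereal" where
  "beta lam M A = (SUP mu \<in> invariant_probs lam M. int_ext mu A)"

definition maximizing :: "real \<Rightarrow> (nat \<Rightarrow> nat \<Rightarrow> bool) \<Rightarrow> ((nat \<Rightarrow> nat) \<Rightarrow> real) \<Rightarrow> (nat \<Rightarrow> nat) measure \<Rightarrow> bool" where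
  "maximizing lam M A mu \<longleftrightarrow> mu \<in> invariant_probs lam M \<and> int_ext mu A = beta lam M A"

definition sub_action :: "real \<Rightarrow> (nat \<Rightarrow> nat \<Rightarrow> bool) \<Rightarrow> ((nat \<Rightarrow> nat) \<Rightarrow> real) \<Rightarrow> ((nat \<Rightarrow> nat) \<Rightarrow> real) \<Rightarrow> bool" where
  "sub_action lam M A u \<longleftrightarrow> cont_on_sh lam (Sigma_M M) u \<and>
     (\<forall>x\<in>Sigma_M M. ereal (A x + u x - u (shift x)) \<le> beta lam M A)"

definition coercive :: "(nat \<Rightarrow> nat \<Rightarrow> bool) \<Rightarrow> ((nat \<Rightarrow> nat) \<Rightarrow> real) \<Rightarrow> bool" where
  "coercive M A \<longleftrightarrow> (\<forall>C::real. \<exists>N. \<forall>i\<ge>N. \<forall>x\<in>Sigma_M M. x 0 = i \<longrightarrow> A x \<le> C)"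

definition supp_sh :: "real \<Rightarrow> (nat \<Rightarrow> nat) measure \<Rightarrow> (nat \<Rightarrow> nat) set" where
  "supp_sh lam mu = {x\<in>space mu. \<forall>r>0. emeasure mu {y\<in>space mu. dist_sh lam x y < r} > 0}"

end

theory Submission
  imports Defs
begin

(* Let b = beta A.  For a maximizing measure mu the function
   g = b - A - u + u o shift is nonnegative (u is a sub-action) and, since u is
   bounded and mu is shift-invariant, its mu-integral is b - int A = 0.  Hence
   A + u - u o shift = b holds mu-almost everywhere.  Coercivity of A and
   boundedness of u then force the first symbol of mu-almost every point to be
   at most some N, and shift-invariance transports this bound to every
   coordinate.  Finally, a point having some coordinate above N has a ball of
   measure zero around it, so it is not in the support. *)

lemma dist_sh_less_agree:
  assumes "0 < lam" "lam < 1" "dist_sh lam x y < lam ^ j" "k \<le> j"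
  shows "y k = x k"
proof (cases "x = y")
  case False
  then have "lam ^ (LEAST i. x i \<noteq> y i) < lam ^ j"
    using assms(3) by (simp add: dist_sh_def)
  then have "k < (LEAST i. x i \<noteq> y i)"
    using assms(1,2,4) by (simp add: power_strict_decreasing_iff)
  then show ?thesis using not_less_Least by fastforce
qed simp

lemma coord_greater_open:
  assumes "0 < lam" "lam < 1"
  shows "{x\<in>S. N < x j} \<in> open_sh lam S"
  unfolding open_sh_def
proof safe
  fix x assume "x \<in> S" "N < x j"
  then show "\<exists>r>0. \<forall>y\<in>S. dist_sh lam x y < r \<longrightarrow> y \<in> {x \<in> S. N < x j}"
    using dist_sh_less_agree[OF assms, of x _ j j] assms
    by (intro exI[of _ "lam ^ j"]) auto
qed

lemma cont_on_sh_superlevel_open: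
  assumes "cont_on_sh lam S f"
  shows "{x\<in>S. a < f x} \<in> open_sh lam S"
  unfolding open_sh_def
proof safe
  fix x assume x: "x \<in> S" "a < f x"
  then obtain r where "r > 0" "\<forall>y\<in>S. dist_sh lam x y < r \<longrightarrow> \<bar>f y - f x\<bar> < f x - a"
    using assms unfolding cont_on_sh_def by (meson diff_gt_0_iff_gt)
  then show "\<exists>r>0. \<forall>y\<in>S. dist_sh lam x y < r \<longrightarrow> y \<in> {x \<in> S. a < f x}"
    by (intro exI[of _ r]) fastforce
qed

lemma open_sh_in_sets:
  assumes "space mu = S" "sets mu = borel_sh lam S" "U \<in> open_sh lam S"
  shows "U \<in> sets mu"
  using assms unfolding borel_sh_def by (auto intro: sigma_sets.Basic)

lemma cont_on_sh_measurable:
  assumes "cont_on_sh lam S f" "space mu = S" "sets mu = borel_sh lam S"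
  shows "f \<in> borel_measurable mu"
proof (rule borel_measurableI_greater)
  fix a
  show "{x \<in> space mu. a < f x} \<in> sets mu"
    using open_sh_in_sets[OF assms(2,3) cont_on_sh_superlevel_open[OF assms(1)]] assms(2)
    by simp
qed

lemma int_ext_integrable:
  assumes "finite_measure mu" "A \<in> borel_measurable mu" "\<forall>x\<in>space mu. A x \<le> C"
    and "int_ext mu A \<noteq> -\<infinity>"
  shows "integrable mu A" and "int_ext mu A = ereal (integral\<^sup>L mu A)"
proof -
  interpret finite_measure mu by (rule assms(1))
  define P where "P = (\<integral>\<^sup>+ x. ennreal (A x) \<partial>mu)"
  define Q where "Q = (\<integral>\<^sup>+ x. ennreal (- A x) \<partial>mu)"
  have "P \<le> (\<integral>\<^sup>+ x. ennreal (max C 0) \<partial>mu)"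
    unfolding P_def using assms(3) by (intro nn_integral_mono ennreal_leI) fastforce
  also have "\<dots> = ennreal (max C 0) * emeasure mu (space mu)" by simp
  also have "\<dots> < \<infinity>" by (simp add: ennreal_mult_eq_top_iff less_top[symmetric])
  finally obtain p where p: "P = ennreal p" "0 \<le> p" by (cases P) auto
  moreover have "Q \<noteq> \<infinity>"
    using assms(4) p unfolding int_ext_def P_def[symmetric] Q_def[symmetric] by auto
  then obtain q where q: "Q = ennreal q" "0 \<le> q" by (cases Q) auto
  ultimately show int: "integrable mu A"
    using assms(2) unfolding real_integrable_def P_def Q_def by auto
  show "int_ext mu A = ereal (integral\<^sup>L mu A)"
    using p q unfolding int_ext_def real_lebesgue_integral_def[OF int]
      P_def[symmetric] Q_def[symmetric] by simp
qed

lemma invariant_probsD: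
  assumes "mu \<in> invariant_probs lam M"
  shows "prob_space mu" "space mu = Sigma_M M" "sets mu = borel_sh lam (Sigma_M M)"
    and "shift \<in> measurable mu mu"
    and "\<And>B. B \<in> sets mu \<Longrightarrow> emeasure mu (shift -` B \<inter> space mu) = emeasure mu B"
  using assms unfolding invariant_probs_def by auto

lemma invariant_distr_shift:
  assumes "mu \<in> invariant_probs lam M"
  shows "distr mu mu shift = mu"
proof (rule measure_eqI)
  fix B assume "B \<in> sets (distr mu mu shift)"
  then have B: "B \<in> sets mu" by simp
  then show "emeasure (distr mu mu shift) B = emeasure mu B"
    using emeasure_distr[OF invariant_probsD(4)[OF assms] B] invariant_probsD(5)[OF assms B]
    by simp
qed simp

text \<open>The
  boundedness of u is what makes the coboundary u - u o shift integrable with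
  integral zero.\<close>
lemma maximizing_cohomology_AE:
  assumes A_cont: "cont_on_sh lam (Sigma_M M) A"
    and A_bdd: "\<exists>C. \<forall>x\<in>Sigma_M M. A x \<le> C"
    and sub: "sub_action lam M A u"
    and u_bdd: "\<exists>C. \<forall>x\<in>Sigma_M M. \<bar>u x\<bar> \<le> C"
    and max: "maximizing lam M A mu"
  obtains b where "beta lam M A = ereal b" "AE x in mu. A x + u x - u (shift x) = b"
proof -
  have inv: "mu \<in> invariant_probs lam M" and intA: "int_ext mu A = beta lam M A"
    using max unfolding maximizing_def by auto
  note sp = invariant_probsD(2)[OF inv] and st = invariant_probsD(3)[OF inv]
  interpret prob_space mu by (rule invariant_probsD(1)[OF inv])
  have [measurable]: "shift \<in> measurable mu mu" by (rule invariant_probsD(4)[OF inv])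
  have shift_space: "x \<in> space mu \<Longrightarrow> shift x \<in> space mu" for x
    using invariant_probsD(4)[OF inv] by (rule measurable_space)
  have sub_le: "\<forall>x\<in>space mu. ereal (A x + u x - u (shift x)) \<le> beta lam M A"
    using sub sp unfolding sub_action_def by simp
  have [measurable]: "A \<in> borel_measurable mu" by (rule cont_on_sh_measurable[OF A_cont sp st])
  have [measurable]: "u \<in> borel_measurable mu"
    using sub cont_on_sh_measurable[OF _ sp st] unfolding sub_action_def by blast
  obtain CA where CA: "\<forall>x\<in>space mu. A x \<le> CA" using A_bdd sp by auto
  obtain Cu where Cu: "\<forall>x\<in>space mu. \<bar>u x\<bar> \<le> Cu" using u_bdd sp by auto

  text \<open>beta is not -\<infinity>, since it dominates the values of A + u - u o shift.\<close>
  obtain x0 where "x0 \<in> space mu" using not_empty by auto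
  then have "beta lam M A \<noteq> -\<infinity>" using sub_le by force
  then have A_int: "integrable mu A" and beta_eq: "beta lam M A = ereal (integral\<^sup>L mu A)"
    using int_ext_integrable[OF finite_measure_axioms _ CA] intA by auto
  define b where "b = integral\<^sup>L mu A"

  have u_int: "integrable mu u"
    using Cu by (intro integrable_const_bound[where B = Cu] AE_I2) auto
  have u_shift_int: "integrable mu (\<lambda>x. u (shift x))"
    using Cu shift_space by (intro integrable_const_bound[where B = Cu] AE_I2) auto
  have u_shift_integral: "integral\<^sup>L mu (\<lambda>x. u (shift x)) = integral\<^sup>L mu u"
    using integral_distr[of shift mu mu u] invariant_distr_shift[OF inv] by simp

  define g where "g x = b - A x - u x + u (shift x)" for x
  have g_int: "integrable mu g" unfolding g_def using A_int u_int u_shift_int by auto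
  have "integral\<^sup>L mu g = b - integral\<^sup>L mu A - integral\<^sup>L mu u + integral\<^sup>L mu (\<lambda>x. u (shift x))"
    unfolding g_def using A_int u_int u_shift_int by (simp add: prob_space)
  then have "integral\<^sup>L mu g = 0" using u_shift_integral b_def by simp
  moreover have "AE x in mu. 0 \<le> g x"
    using sub_le beta_eq unfolding g_def b_def by (intro AE_I2) fastforce
  ultimately have "AE x in mu. g x = 0" using integral_nonneg_eq_0_iff_AE[OF g_int] by simp
  then have "AE x in mu. A x + u x - u (shift x) = b" by eventually_elim (simp add: g_def)
  with beta_eq b_def show ?thesis using that by blast
qed

lemma shift_Sigma_M: "x \<in> Sigma_M M \<Longrightarrow> shift x \<in> Sigma_M M"
  unfolding Sigma_M_def shift_def by simp

lemma coercive_AE_first_symbol_bounded: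
  assumes "coercive M A" "space mu = Sigma_M M"
    and "AE x in mu. A x + u x - u (shift x) = b"
    and "\<forall>x\<in>Sigma_M M. \<bar>u x\<bar> \<le> Cu"
  obtains N where "AE x in mu. x 0 \<le> N"
proof -
  obtain N where N: "\<forall>i\<ge>N. \<forall>x\<in>Sigma_M M. x 0 = i \<longrightarrow> A x \<le> b - 2 * Cu - 1"
    using assms(1) unfolding coercive_def by blast
  have "AE x in mu. x 0 \<le> N"
    using assms(3) AE_space
  proof eventually_elim
    case (elim x)
    show "x 0 \<le> N"
    proof (rule ccontr)
      assume "\<not> x 0 \<le> N"
      then have "N \<le> x 0" by simp
      then have "A x \<le> b - 2 * Cu - 1" using N elim(2) assms(2) by blast
      moreover have "\<bar>u x\<bar> \<le> Cu" "\<bar>u (shift x)\<bar> \<le> Cu"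
        using assms(2,4) elim(2) shift_Sigma_M by auto
      ultimately show False using elim(1) by linarith
    qed
  qed
  then show ?thesis using that by blast
qed

lemma invariant_coord_null:
  assumes "0 < lam" "lam < 1" "mu \<in> invariant_probs lam M" "AE x in mu. x 0 \<le> N"
  shows "emeasure mu {x\<in>space mu. N < x j} = 0"
proof (induction j)
  have meas: "{x\<in>space mu. N < x j} \<in> sets mu" for j
    using open_sh_in_sets[OF invariant_probsD(2,3)[OF assms(3)] coord_greater_open[OF assms(1,2)]]
      invariant_probsD(2)[OF assms(3)] by simp
  {
    case 0
    show ?case
      using AE_iff_measurable[OF meas[of 0], of "\<lambda>x. x 0 \<le> N"] assms(4) by (simp add: not_le)
  next
    case (Suc j)
    have "shift -` {x\<in>space mu. N < x j} \<inter> space mu = {x\<in>space mu. N < x (Suc j)}"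
      using measurable_space[OF invariant_probsD(4)[OF assms(3)]] by (auto simp: shift_def)
    then show ?case using invariant_probsD(5)[OF assms(3) meas[of j]] Suc by simp
  }
qed

text \<open>A point with a coordinate above N has a ball of measure zero around it;
  hence the support lies in the finite-alphabet subshift Sigma_I M N.\<close>
lemma supp_sh_subset_Sigma_I:
  assumes "0 < lam" "lam < 1" "space mu = Sigma_M M" "sets mu = borel_sh lam (Sigma_M M)"
    and null: "\<And>j. emeasure mu {x\<in>space mu. N < x j} = 0"
  shows "supp_sh lam mu \<subseteq> Sigma_I M N"
proof
  fix x assume "x \<in> supp_sh lam mu"
  then have x: "x \<in> space mu"
    and pos: "\<And>r. r > 0 \<Longrightarrow> emeasure mu {y\<in>space mu. dist_sh lam x y < r} > 0"
    unfolding supp_sh_def by auto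
  have "x j \<le> N" for j
  proof (rule ccontr)
    assume "\<not> x j \<le> N"
    then have ball_sub: "{y\<in>space mu. dist_sh lam x y < lam ^ j} \<subseteq> {y\<in>space mu. N < y j}"
      using dist_sh_less_agree[OF assms(1,2), of x _ j j] by auto
    have "{y\<in>space mu. N < y j} \<in> sets mu"
      using open_sh_in_sets[OF assms(3,4) coord_greater_open[OF assms(1,2)]] assms(3) by simp
    with ball_sub have "emeasure mu {y\<in>space mu. dist_sh lam x y < lam ^ j}
        \<le> emeasure mu {y\<in>space mu. N < y j}"
      by (rule emeasure_mono)
    then show False using pos[of "lam ^ j"] null[of j] assms(1) by simp
  qed
  then show "x \<in> Sigma_I M N" using x assms(3) unfolding Sigma_I_def Sigma_M_def by auto
qed

theorem mainTheorem7:
  fixes lam :: real and M :: "nat \<Rightarrow> nat \<Rightarrow> bool"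
    and A u :: "(nat \<Rightarrow> nat) \<Rightarrow> real" and mu :: "(nat \<Rightarrow> nat) measure"
  assumes "0 < lam" "lam < 1"
    and "primitive M"
    and "cont_on_sh lam (Sigma_M M) A"
    and "\<exists>C. \<forall>x\<in>Sigma_M M. A x \<le> C"
    and "coercive M A"
    and "sub_action lam M A u"
    and "\<exists>C. \<forall>x\<in>Sigma_M M. \<bar>u x\<bar> \<le> C"
    and "maximizing lam M A mu"
  shows "\<exists>I::nat. supp_sh lam mu \<subseteq> Sigma_I M I"
proof -
  have inv: "mu \<in> invariant_probs lam M" using assms(9) unfolding maximizing_def by simp
  obtain b where "AE x in mu. A x + u x - u (shift x) = b"
    using maximizing_cohomology_AE[OF assms(4,5,7,8,9)] by blast
  moreover obtain Cu where "\<forall>x\<in>Sigma_M M. \<bar>u x\<bar> \<le> Cu" using assms(8) by blast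
  ultimately obtain N where "AE x in mu. x 0 \<le> N"
    using coercive_AE_first_symbol_bounded[OF assms(6) invariant_probsD(2)[OF inv]] by blast
  then have "\<And>j. emeasure mu {x\<in>space mu. N < x j} = 0"
    using invariant_coord_null[OF assms(1,2) inv] by blast
  then have "supp_sh lam mu \<subseteq> Sigma_I M N"
    using supp_sh_subset_Sigma_I[OF assms(1,2) invariant_probsD(2,3)[OF inv]] by blast
  then show ?thesis by blast
qed

end
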